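(* Let $\sigma\in(0,0.25]$, $\pi_0\in(0,1)$, $w>0$ and $\pi^*\in(0,1)$, and let $\psi(\pi)=w$ if $\pi\ge\pi^*$ and $\psi(\pi)=0$ otherwise. Define $\pi_1(1)=\frac{(1+4\sigma)\pi_0}{1+4\sigma\pi_0}$, $\pi_1(0)=\frac{(1-4\sigma)\pi_0}{1-4\sigma\pi_0}$, $\Phi(C,\sigma,\pi_0)=0.5+2\sigma\pi_0+(0.5+2\sigma\pi_0)\psi(\pi_1(1))+(0.5-2\sigma\pi_0)\psi(\pi_1(0))$ and $\Phi(S,\sigma,\pi_0)=0.5+\psi(\pi_0)$; the expert chooses the complex rule iff $\Phi(C,\sigma,\pi_0)\ge\Phi(S,\sigma,\pi_0)$ and the simple rule otherwise. Let $$\pi^\dagger=\frac{w}{4\sigma(1+w)},\qquad \overline\pi=\frac{\pi^*}{1-4\sigma(1-\pi^* )}.$$ If $\pi^\dagger\le\pi^*$ then the expert chooses the complex rule. If $\pi^\dagger>\pi^*$ then he chooses the simple rule if and only if $\pi^*\le\pi_0<\min\{\pi^\dagger,\overline\pi\}$.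
   Context: Interpretation: the expert earns wage $w$ iff the posterior belief that he is competent is at least $\pi^*$; the complex rule yields the correct action with probability $0.5+2\sigma$ if he is competent and $0.5$ otherwise (posterior $\pi_1(Y)$ after correct $Y=1$ or incorrect $Y=0$ action), and the simple rule yields it with probability $0.5$ and leaves the posterior at the prior $\pi_0$. *)

theory Defs
  imports Complex_Main
begin

definition psi :: "real \<Rightarrow> real \<Rightarrow> real \<Rightarrow> real" where
  "psi w pistar p = (if p \<ge> pistar then w else 0)"

text \<open>Posteriors after a correct (Y=1) / incorrect (Y=0) action under the complex rule.\<close>
definition pi1_correct :: "real \<Rightarrow> real \<Rightarrow> real" where
  "pi1_correct \<sigma> \<pi>0 = ((1 + 4*\<sigma>) * \<pi>0) / (1 + 4*\<sigma>*\<pi>0)"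

definition pi1_incorrect :: "real \<Rightarrow> real \<Rightarrow> real" where
  "pi1_incorrect \<sigma> \<pi>0 = ((1 - 4*\<sigma>) * \<pi>0) / (1 - 4*\<sigma>*\<pi>0)"

definition Phi_C :: "real \<Rightarrow> real \<Rightarrow> real \<Rightarrow> real \<Rightarrow> real" where
  "Phi_C w pistar \<sigma> \<pi>0 =
     1/2 + 2*\<sigma>*\<pi>0
     + (1/2 + 2*\<sigma>*\<pi>0) * psi w pistar (pi1_correct \<sigma> \<pi>0)
     + (1/2 - 2*\<sigma>*\<pi>0) * psi w pistar (pi1_incorrect \<sigma> \<pi>0)"

definition Phi_S :: "real \<Rightarrow> real \<Rightarrow> real \<Rightarrow> real" where
  "Phi_S w pistar \<pi>0 = 1/2 + psi w pistar \<pi>0"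

definition chooses_complex :: "real \<Rightarrow> real \<Rightarrow> real \<Rightarrow> real \<Rightarrow> bool" where
  "chooses_complex w pistar \<sigma> \<pi>0 \<longleftrightarrow> Phi_C w pistar \<sigma> \<pi>0 \<ge> Phi_S w pistar \<pi>0"

definition chooses_simple :: "real \<Rightarrow> real \<Rightarrow> real \<Rightarrow> real \<Rightarrow> bool" where
  "chooses_simple w pistar \<sigma> \<pi>0 \<longleftrightarrow> \<not> chooses_complex w pistar \<sigma> \<pi>0"

definition pi_dagger :: "real \<Rightarrow> real \<Rightarrow> real" where
  "pi_dagger w \<sigma> = w / (4*\<sigma>*(1 + w))"

definition pi_bar :: "real \<Rightarrow> real \<Rightarrow> real" where
  "pi_bar pistar \<sigma> = pistar / (1 - 4*\<sigma>*(1 - pistar))"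

end

theory Submission
  imports Defs
begin

text \<open>Under the complex rule the expert gains \<open>2\<sigma>\<pi>0\<close> in success probability but risks
  the wage. If \<open>\<pi>0 < pistar\<close> the simple rule earns no wage, so it is never better. If
  \<open>pistar \<le> \<pi>0\<close>, a correct action keeps the posterior above \<open>pistar\<close>, and an incorrect one
  keeps it there exactly when \<open>pi_bar \<le> \<pi>0\<close>; then the complex rule wins outright. In the
  remaining window \<open>pistar \<le> \<pi>0 < pi_bar\<close> the comparison of payoffs reduces to the linear
  inequality \<open>w \<le> 4\<sigma>\<pi>0(1 + w)\<close>, i.e. \<open>pi_dagger \<le> \<pi>0\<close>. Hence the simple rule is chosen
  exactly on \<open>pistar \<le> \<pi>0 < min pi_dagger pi_bar\<close>, which is empty when
  \<open>pi_dagger \<le> pistar\<close>.\<close>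

lemma pi1_correct_ge_prior:
  assumes "0 \<le> \<sigma>" and "0 \<le> \<pi>0" and "\<pi>0 \<le> 1"
  shows "\<pi>0 \<le> pi1_correct \<sigma> \<pi>0"
proof -
  have "\<pi>0 * (1 + 4*\<sigma>*\<pi>0) \<le> (1 + 4*\<sigma>) * \<pi>0"
    using assms mult_left_le[of \<pi>0 "\<sigma> * \<pi>0"] by (simp add: algebra_simps)
  moreover have "0 < 1 + 4*\<sigma>*\<pi>0"
    using assms by (simp add: add_pos_nonneg)
  ultimately show ?thesis
    unfolding pi1_correct_def by (simp add: pos_le_divide_eq)
qed

lemma pi1_incorrect_ge_iff_pi_bar_le:
  assumes "4*\<sigma>*\<pi>0 < 1" and "4*\<sigma>*(1 - pistar) < 1"
  shows "pistar \<le> pi1_incorrect \<sigma> \<pi>0 \<longleftrightarrow> pi_bar pistar \<sigma> \<le> \<pi>0"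
proof -
  have "pistar \<le> pi1_incorrect \<sigma> \<pi>0 \<longleftrightarrow> pistar * (1 - 4*\<sigma>*\<pi>0) \<le> (1 - 4*\<sigma>) * \<pi>0"
    using assms(1) unfolding pi1_incorrect_def by (simp add: pos_le_divide_eq)
  also have "\<dots> \<longleftrightarrow> pistar \<le> \<pi>0 * (1 - 4*\<sigma>*(1 - pistar))"
    by (simp add: algebra_simps)
  also have "\<dots> \<longleftrightarrow> pi_bar pistar \<sigma> \<le> \<pi>0"
    using assms(2) unfolding pi_bar_def by (simp add: pos_divide_le_eq)
  finally show ?thesis .
qed

lemma pi_dagger_le_iff:
  assumes "0 < \<sigma>" and "0 < w"
  shows "pi_dagger w \<sigma> \<le> \<pi>0 \<longleftrightarrow> w \<le> 4*\<sigma>*\<pi>0*(1 + w)"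
proof -
  have "0 < 4*\<sigma>*(1 + w)"
    using assms by simp
  then show ?thesis
    unfolding pi_dagger_def by (simp add: pos_divide_le_eq algebra_simps)
qed

lemma chooses_complex_if_prior_below_threshold:
  assumes "\<pi>0 < pistar" and "0 \<le> w" and "0 \<le> \<sigma>*\<pi>0" and "4*\<sigma>*\<pi>0 \<le> 1"
  shows "chooses_complex w pistar \<sigma> \<pi>0"
proof -
  have "0 \<le> psi w pistar p" for p
    using assms(2) by (simp add: psi_def)
  moreover have "0 \<le> 1/2 - 2*\<sigma>*\<pi>0"
    using assms(4) by simp
  ultimately have "1/2 \<le> Phi_C w pistar \<sigma> \<pi>0"
    using assms(3) unfolding Phi_C_def by (simp add: add_nonneg_nonneg)
  then show ?thesis
    using assms(1) by (simp add: chooses_complex_def Phi_S_def psi_def)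
qed

lemma chooses_complex_if_posteriors_above_threshold:
  assumes "pistar \<le> pi1_correct \<sigma> \<pi>0" and "pistar \<le> pi1_incorrect \<sigma> \<pi>0"
    and "0 \<le> w" and "0 \<le> \<sigma>*\<pi>0"
  shows "chooses_complex w pistar \<sigma> \<pi>0"
proof -
  have "Phi_C w pistar \<sigma> \<pi>0 = 1/2 + 2*\<sigma>*\<pi>0 + w"
    using assms(1,2) unfolding Phi_C_def psi_def by (simp add: algebra_simps)
  moreover have "Phi_S w pistar \<pi>0 \<le> 1/2 + w"
    using assms(3) by (simp add: Phi_S_def psi_def)
  ultimately show ?thesis
    using assms(4) by (simp add: chooses_complex_def)
qed

lemma chooses_complex_iff_when_failure_loses_wage:
  assumes "pistar \<le> \<pi>0" and "pistar \<le> pi1_correct \<sigma> \<pi>0" and "pi1_incorrect \<sigma> \<pi>0 < pistar"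
  shows "chooses_complex w pistar \<sigma> \<pi>0 \<longleftrightarrow> w \<le> 4*\<sigma>*\<pi>0*(1 + w)"
proof -
  have "2 * (Phi_C w pistar \<sigma> \<pi>0 - Phi_S w pistar \<pi>0) = 4*\<sigma>*\<pi>0*(1 + w) - w"
    using assms unfolding Phi_C_def Phi_S_def psi_def by (simp add: algebra_simps)
  then show ?thesis
    unfolding chooses_complex_def by (smt (verit))
qed

lemma chooses_simple_iff:
  assumes "0 < \<sigma>" and "\<sigma> \<le> 1/4"
    and "0 < \<pi>0" and "\<pi>0 < 1"
    and "0 < w"
    and "0 < pistar" and "pistar < 1"
  shows "chooses_simple w pistar \<sigma> \<pi>0 \<longleftrightarrow>
           pistar \<le> \<pi>0 \<and> \<pi>0 < pi_dagger w \<sigma> \<and> \<pi>0 < pi_bar pistar \<sigma>"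
proof -
  have scaled_lt_one: "4*\<sigma>*x < 1" if "x < 1" for x
  proof -
    have "4*\<sigma>*x < 4*\<sigma>"
      using assms(1) that by simp
    with assms(2) show ?thesis
      by linarith
  qed
  have "4*\<sigma>*\<pi>0 < 1" and "4*\<sigma>*(1 - pistar) < 1"
    using scaled_lt_one assms(4,6) by simp_all
  then have incorrect_iff: "pistar \<le> pi1_incorrect \<sigma> \<pi>0 \<longleftrightarrow> pi_bar pistar \<sigma> \<le> \<pi>0"
    by (rule pi1_incorrect_ge_iff_pi_bar_le)
  have "0 < \<sigma>*\<pi>0"
    using assms(1,3) by simp
  consider (below) "\<pi>0 < pistar"
    | (safe) "pistar \<le> \<pi>0" "pi_bar pistar \<sigma> \<le> \<pi>0"
    | (risky) "pistar \<le> \<pi>0" "\<pi>0 < pi_bar pistar \<sigma>"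
    by linarith
  then show ?thesis
  proof cases
    case below
    then show ?thesis
      using chooses_complex_if_prior_below_threshold \<open>4*\<sigma>*\<pi>0 < 1\<close> \<open>0 < \<sigma>*\<pi>0\<close> assms(5)
      by (simp add: chooses_simple_def)
  next
    case safe
    have "pistar \<le> pi1_correct \<sigma> \<pi>0"
      using safe(1) pi1_correct_ge_prior[of \<sigma> \<pi>0] assms(1,3,4) by simp
    then show ?thesis
      using chooses_complex_if_posteriors_above_threshold incorrect_iff safe
        \<open>0 < \<sigma>*\<pi>0\<close> assms(5)
      by (simp add: chooses_simple_def)
  next
    case risky
    have "pistar \<le> pi1_correct \<sigma> \<pi>0"
      using risky(1) pi1_correct_ge_prior[of \<sigma> \<pi>0] assms(1,3,4) by simp
    moreover have "pi1_incorrect \<sigma> \<pi>0 < pistar"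
      using incorrect_iff risky(2) by linarith
    ultimately have "chooses_complex w pistar \<sigma> \<pi>0 \<longleftrightarrow> pi_dagger w \<sigma> \<le> \<pi>0"
      using chooses_complex_iff_when_failure_loses_wage[OF risky(1)]
        pi_dagger_le_iff[OF assms(1,5)] by simp
    then show ?thesis
      using risky by (auto simp: chooses_simple_def)
  qed
qed

theorem proposition5:
  fixes \<sigma> \<pi>0 w pistar :: real
  assumes "0 < \<sigma>" and "\<sigma> \<le> 1/4"
    and "0 < \<pi>0" and "\<pi>0 < 1"
    and "0 < w"
    and "0 < pistar" and "pistar < 1"
  shows "(pi_dagger w \<sigma> \<le> pistar \<longrightarrow> chooses_complex w pistar \<sigma> \<pi>0)
       \<and> (pi_dagger w \<sigma> > pistar \<longrightarrow>
            (chooses_simple w pistar \<sigma> \<pi>0 \<longleftrightarrow>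
               pistar \<le> \<pi>0 \<and> \<pi>0 < min (pi_dagger w \<sigma>) (pi_bar pistar \<sigma>)))"
  using chooses_simple_iff[OF assms] unfolding chooses_simple_def by auto

end
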